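(* Let $\langle\mathbf{B},\mathbf{I}\rangle$ be a Bochvar system. Let $\mathbb{A}_{\mathbb{B}}$ be the semilattice direct system with: - index join-semilattice $I$ ordered dually to $\mathbf{B}$, with least element $1$; - fibres $\mathbf{B}/[i)$ for $i\in I$; - maps $p_{ij}(a/[i))=a/[j)$ for $j\le_{\mathbf{B}}i$. Then the Płonka sum of $\mathbb{A}_{\mathbb{B}}$, an algebra of type $\langle\wedge,\vee,\neg,0,1\rangle$, is the $\{\wedge,\vee,\neg,0,1\}$-reduct of a unique Bochvar algebra. In other words, there is exactly one unary operation $J_2$ on it making it a Bochvar algebra.
   Context: A Bochvar system is a pair $\langle\mathbf{B},\mathbf{I}\rangle$ where $\mathbf{B}$ is a Boolean algebra and $I\subseteq B$ contains $1$ and is closed under $\wedge$. $[i)$ is the principal filter of $\mathbf{B}$ generated by $i$. $\mathbf{B}/[i)$ is the quotient by $\{\langle a,b\rangle:(\neg a\vee b)\wedge(\neg b\vee a)\in[i)\}$. Płonka sum of a semilattice direct system $\langle\{\mathbf{A}_i\},\langle I,\vee,i_0\rangle,\{p_{ij}\}\rangle$: the universe is the disjoint union of the $A_i$. Operations are $g(a_1,\dots,a_n)=g^{\mathbf{A}_k}(p_{i_1k}(a_1),\dots,p_{i_nk}(a_n))$ for $a_m\in A_{i_m}$ and $k=\bigvee i_m$; constants are those of $\mathbf{A}_{i_0}$. $\mathbf{WK}^e$ is the three-element algebra on $\{0,\tfrac12,1\}$ of type $\langle\wedge,\vee,\neg,J_2,0,1\rangle$. Its operations are: - $\neg$ swaps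 $0,1$ and fixes $\tfrac12$; - $\wedge,\vee$ are Boolean on $\{0,1\}$ and return $\tfrac12$ whenever some argument is $\tfrac12$; - $J_2(1)=1$ and $J_2(\tfrac12)=J_2(0)=0$. Bochvar algebras are the members of $ISP(\mathbf{WK}^e)$. *)

theory Defs
  imports Main
begin

datatype wk = W0 | Wh | W1

fun wk_neg :: "wk \<Rightarrow> wk" where
  "wk_neg W0 = W1" | "wk_neg W1 = W0" | "wk_neg Wh = Wh"

fun wk_and :: "wk \<Rightarrow> wk \<Rightarrow> wk" where
  "wk_and Wh _ = Wh" | "wk_and _ Wh = Wh"
| "wk_and W1 W1 = W1" | "wk_and W1 W0 = W0" | "wk_and W0 W1 = W0" | "wk_and W0 W0 = W0"

fun wk_or :: "wk \<Rightarrow> wk \<Rightarrow> wk" where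
  "wk_or Wh _ = Wh" | "wk_or _ Wh = Wh"
| "wk_or W0 W0 = W0" | "wk_or W1 W0 = W1" | "wk_or W0 W1 = W1" | "wk_or W1 W1 = W1"

fun wk_J2 :: "wk \<Rightarrow> wk" where
  "wk_J2 W1 = W1" | "wk_J2 Wh = W0" | "wk_J2 W0 = W0"

text \<open>An algebra of type (and, or, neg, J2, 0, 1) with carrier U (given as a subset of
  some type 'b, operations given as functions on 'b) lies in ISP(WK^e) iff U is closed under
  the operations and there is an injective homomorphism h from it into the direct power
  (WK^e)^X for some index set X. The index set is taken from the type 'b => wk, which is
  large enough for every algebra on a carrier in 'b.\<close>

definition bochvar_algebra ::
  "'b set \<Rightarrow> ('b \<Rightarrow> 'b \<Rightarrow> 'b) \<Rightarrow> ('b \<Rightarrow> 'b \<Rightarrow> 'b) \<Rightarrow> ('b \<Rightarrow> 'b) \<Rightarrow> ('b \<Rightarrow> 'b)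
   \<Rightarrow> 'b \<Rightarrow> 'b \<Rightarrow> bool" where
  "bochvar_algebra U mt jn ng j2 z u \<longleftrightarrow>
     (\<forall>x\<in>U. \<forall>y\<in>U. mt x y \<in> U \<and> jn x y \<in> U) \<and>
     (\<forall>x\<in>U. ng x \<in> U \<and> j2 x \<in> U) \<and> z \<in> U \<and> u \<in> U \<and>
     (\<exists>(X :: ('b \<Rightarrow> wk) set) (h :: 'b \<Rightarrow> ('b \<Rightarrow> wk) \<Rightarrow> wk).
        (\<forall>x\<in>U. \<forall>y\<in>U. \<forall>s\<in>X. h (mt x y) s = wk_and (h x s) (h y s)) \<and>
        (\<forall>x\<in>U. \<forall>y\<in>U. \<forall>s\<in>X. h (jn x y) s = wk_or (h x s) (h y s)) \<and>
        (\<forall>x\<in>U. \<forall>s\<in>X. h (ng x) s = wk_neg (h x s)) \<and>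
        (\<forall>x\<in>U. \<forall>s\<in>X. h (j2 x) s = wk_J2 (h x s)) \<and>
        (\<forall>s\<in>X. h z s = W0) \<and> (\<forall>s\<in>X. h u s = W1) \<and>
        (\<forall>x\<in>U. \<forall>y\<in>U. (\<forall>s\<in>X. h x s = h y s) \<longrightarrow> x = y))"

definition bochvar_system :: "'a::boolean_algebra set \<Rightarrow> bool" where
  "bochvar_system I \<longleftrightarrow> top \<in> I \<and> (\<forall>i\<in>I. \<forall>j\<in>I. inf i j \<in> I)"

text \<open>The class a/[i) of a in B/[i), where [i) = {x. i \<le> x} is the principal filter.\<close>
definition fcls :: "'a::boolean_algebra \<Rightarrow> 'a \<Rightarrow> 'a set" where
  "fcls i a = {b. inf (sup (- a) b) (sup (- b) a) \<in> {x. i \<le> x}}"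

definition crep :: "'a set \<Rightarrow> 'a" where
  "crep S = (SOME a. a \<in> S)"

definition ptrans :: "'a::boolean_algebra \<Rightarrow> 'a set \<Rightarrow> 'a set" where
  "ptrans j S = fcls j (crep S)"

text \<open>Elements of the Plonka sum: pairs (i, a/[i)) with i \<in> I (disjoint union of fibres).\<close>
definition pl_univ :: "'a::boolean_algebra set \<Rightarrow> ('a \<times> 'a set) set" where
  "pl_univ I = {(i, fcls i a) | i a. i \<in> I}"

text \<open>The join in the index semilattice (ordered dually to B) is the meet of B.\<close>
definition pl_meet :: "('a::boolean_algebra \<times> 'a set) \<Rightarrow> ('a \<times> 'a set) \<Rightarrow> ('a \<times> 'a set)" where
  "pl_meet x y = (let k = inf (fst x) (fst y) in
     (k, fcls k (inf (crep (ptrans k (snd x))) (crep (ptrans k (snd y))))))"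

definition pl_join :: "('a::boolean_algebra \<times> 'a set) \<Rightarrow> ('a \<times> 'a set) \<Rightarrow> ('a \<times> 'a set)" where
  "pl_join x y = (let k = inf (fst x) (fst y) in
     (k, fcls k (sup (crep (ptrans k (snd x))) (crep (ptrans k (snd y))))))"

definition pl_neg :: "('a::boolean_algebra \<times> 'a set) \<Rightarrow> ('a \<times> 'a set)" where
  "pl_neg x = (fst x, fcls (fst x) (- crep (snd x)))"

text \<open>Constants come from the fibre at the least index 1 (= top of B).\<close>
definition pl_zero :: "('a::boolean_algebra \<times> 'a set)" where
  "pl_zero = (top, fcls top bot)"

definition pl_one :: "('a::boolean_algebra \<times> 'a set)" where
  "pl_one = (top, fcls top top)"

end

(*
  Points of the Plonka sum are pairs (i, a/[i)).  An ultrafilter \<phi> of B sends such a pair to 1/2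
  if i \<notin> \<phi>, and otherwise to 1 or 0 according as a \<in> \<phi>.  With J2 (i, a/[i)) = (1, (i \<and> a)/[1))
  these evaluations are homomorphisms into WK^e, and since the ultrafilters of B separate its
  elements, they jointly separate the points of the sum: this J2 makes it a Bochvar algebra.

  Conversely, the laws J2 x \<or> \<not>J2 x = 1, \<not>J2 x \<and> x = x \<and> \<not>x, and J2 x \<and> g = 0 whenever
  g \<or> \<not>g = 1 and x \<and> g = x \<and> \<not>x hold in WK^e and hence in every Bochvar algebra.  In the
  Plonka sum the first puts J2 x into the fibre over 1, the second gives i \<and> a \<le> J2 x, and the
  third, applied to g = \<not>(i \<and> a)/[1), gives J2 x \<le> i \<and> a.
*)

theory Submission
  imports Defs
begin

section \<open>Ultrafilters of a Boolean algebra\<close>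

definition proper_filter :: "'a::boolean_algebra set \<Rightarrow> bool" where
  "proper_filter F \<longleftrightarrow> top \<in> F \<and> bot \<notin> F \<and> (\<forall>x\<in>F. \<forall>y. x \<le> y \<longrightarrow> y \<in> F) \<and>
     (\<forall>x\<in>F. \<forall>y\<in>F. inf x y \<in> F)"

text \<open>A two-valued homomorphism is the characteristic function of an ultrafilter.\<close>

definition bool_hom :: "('a::boolean_algebra \<Rightarrow> bool) \<Rightarrow> bool" where
  "bool_hom \<phi> \<longleftrightarrow> \<phi> top \<and> (\<forall>a b. \<phi> (inf a b) = (\<phi> a \<and> \<phi> b)) \<and> (\<forall>a. \<phi> (- a) = (\<not> \<phi> a))"

lemma bool_hom_simps:
  assumes "bool_hom \<phi>"
  shows "\<phi> top" "\<not> \<phi> bot" "\<phi> (inf a b) \<longleftrightarrow> \<phi> a \<and> \<phi> b" "\<phi> (sup a b) \<longleftrightarrow> \<phi> a \<or> \<phi> b"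
    "\<phi> (- a) \<longleftrightarrow> \<not> \<phi> a"
proof -
  show top: "\<phi> top" and inf: "\<phi> (inf a b) \<longleftrightarrow> \<phi> a \<and> \<phi> b" and compl: "\<phi> (- a) \<longleftrightarrow> \<not> \<phi> a"
    for a b using assms by (auto simp: bool_hom_def)
  show "\<not> \<phi> bot"
    using compl[of top] top by simp
  show "\<phi> (sup a b) \<longleftrightarrow> \<phi> a \<or> \<phi> b"
    using compl[of "inf (- a) (- b)"] inf[of "- a" "- b"] compl by simp
qed

lemma proper_filter_principal: "c \<noteq> bot \<Longrightarrow> proper_filter {x. c \<le> x}"
  by (auto simp: proper_filter_def bot_unique intro: order_trans)

lemma proper_filter_chain_Union:
  assumes "C \<noteq> {}" "subset.chain {F. proper_filter F} C"
  shows "proper_filter (\<Union>C)"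
proof -
  have filters: "\<And>F. F \<in> C \<Longrightarrow> proper_filter F"
    and chain: "\<And>F G. F \<in> C \<Longrightarrow> G \<in> C \<Longrightarrow> F \<subseteq> G \<or> G \<subseteq> F"
    using assms(2) by (auto simp: subset.chain_def)
  show ?thesis
    unfolding proper_filter_def
  proof (intro conjI ballI allI impI)
    show "top \<in> \<Union>C"
      using assms(1) filters by (auto simp: proper_filter_def)
    show "bot \<notin> \<Union>C"
      using filters by (auto simp: proper_filter_def)
    show "y \<in> \<Union>C" if "x \<in> \<Union>C" "x \<le> y" for x y
      using that filters unfolding proper_filter_def by blast
    show "inf x y \<in> \<Union>C" if xy: "x \<in> \<Union>C" "y \<in> \<Union>C" for x y
    proof -
      obtain F G where "F \<in> C" "G \<in> C" "x \<in> F" "y \<in> G"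
        using xy by blast
      with chain[of F G] obtain H where "H \<in> C" "x \<in> H" "y \<in> H"
        by blast
      with filters[of H] show ?thesis
        unfolding proper_filter_def by blast
    qed
  qed
qed

lemma proper_filter_extend:
  assumes F: "proper_filter F" and "- a \<notin> F"
  shows "proper_filter {x. \<exists>f\<in>F. inf f a \<le> x}"
proof -
  let ?G = "{x. \<exists>f\<in>F. inf f a \<le> x}"
  have top: "top \<in> F" and up: "\<And>x y. x \<in> F \<Longrightarrow> x \<le> y \<Longrightarrow> y \<in> F"
    and meet: "\<And>x y. x \<in> F \<Longrightarrow> y \<in> F \<Longrightarrow> inf x y \<in> F"
    using F by (auto simp: proper_filter_def)
  show ?thesis
    unfolding proper_filter_def
  proof (intro conjI ballI allI impI)
    show "top \<in> ?G"
      using top by auto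
    show "bot \<notin> ?G"
    proof
      assume "bot \<in> ?G"
      then obtain f where "f \<in> F" "inf f a = bot"
        using bot_unique by auto
      then have "- a \<in> F"
        using up by (simp add: inf_shunt)
      with \<open>- a \<notin> F\<close> show False ..
    qed
    show "y \<in> ?G" if "x \<in> ?G" "x \<le> y" for x y
      using that order_trans by blast
    show "inf x y \<in> ?G" if xy: "x \<in> ?G" "y \<in> ?G" for x y
    proof -
      obtain f g where fg: "f \<in> F" "g \<in> F" "inf f a \<le> x" "inf g a \<le> y"
        using xy by blast
      have "inf (inf f g) a \<le> inf (inf f a) (inf g a)"
        by (simp add: inf.coboundedI1 inf.coboundedI2)
      also have "\<dots> \<le> inf x y"
        using fg(3,4) by (rule inf_mono)
      finally show ?thesis
        using meet[OF fg(1,2)] by blast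
    qed
  qed
qed

lemma maximal_proper_filter_bool_hom:
  assumes M: "proper_filter M" and maximal: "\<And>F. proper_filter F \<Longrightarrow> M \<subseteq> F \<Longrightarrow> F = M"
  shows "bool_hom (\<lambda>x. x \<in> M)"
proof -
  have top: "top \<in> M" and bot: "bot \<notin> M" and up: "\<And>x y. x \<in> M \<Longrightarrow> x \<le> y \<Longrightarrow> y \<in> M"
    and meet: "\<And>x y. x \<in> M \<Longrightarrow> y \<in> M \<Longrightarrow> inf x y \<in> M"
    using M by (auto simp: proper_filter_def)
  have mem_or_compl: "a \<in> M \<or> - a \<in> M" for a
  proof (rule ccontr)
    assume neither: "\<not> (a \<in> M \<or> - a \<in> M)"
    let ?F = "{x. \<exists>f\<in>M. inf f a \<le> x}"
    have "proper_filter ?F"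
      using proper_filter_extend[OF M] neither by blast
    moreover have "M \<subseteq> ?F"
      using inf_le1 by blast
    ultimately have "?F = M"
      by (rule maximal)
    moreover have "a \<in> ?F"
      using top by auto
    ultimately show False
      using neither by blast
  qed
  have not_both: "a \<in> M \<Longrightarrow> - a \<notin> M" for a
    using meet[of a "- a"] bot by auto
  show ?thesis
    unfolding bool_hom_def
  proof (intro conjI allI)
    show "top \<in> M"
      by (fact top)
    show "inf a b \<in> M \<longleftrightarrow> a \<in> M \<and> b \<in> M" for a b
      using up[of "inf a b" a] up[of "inf a b" b] meet[of a b] by auto
    show "- a \<in> M \<longleftrightarrow> a \<notin> M" for a
      using mem_or_compl not_both by blast
  qed
qed

lemma bool_hom_exists:
  fixes c :: "'a::boolean_algebra"
  assumes "c \<noteq> bot"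
  shows "\<exists>\<phi>. bool_hom \<phi> \<and> \<phi> c"
proof -
  let ?A = "{F. proper_filter F \<and> c \<in> F}"
  have "\<exists>M\<in>?A. \<forall>F\<in>?A. M \<subseteq> F \<longrightarrow> F = M"
  proof (rule subset_Zorn_nonempty)
    show "?A \<noteq> {}"
      using proper_filter_principal[OF assms] by blast
    show "\<Union>C \<in> ?A" if C: "C \<noteq> {}" "subset.chain ?A C" for C
    proof -
      have "subset.chain {F. proper_filter F} C"
        using C(2) by (auto simp: subset.chain_def)
      with C(1) have "proper_filter (\<Union>C)"
        by (rule proper_filter_chain_Union)
      moreover have "c \<in> \<Union>C"
        using C by (auto simp: subset.chain_def)
      ultimately show ?thesis
        by blast
    qed
  qed
  then obtain M where "proper_filter M" "c \<in> M" "\<And>F. proper_filter F \<Longrightarrow> M \<subseteq> F \<Longrightarrow> F = M"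
    by blast
  then show ?thesis
    using maximal_proper_filter_bool_hom by blast
qed

lemma bool_hom_eqI:
  fixes x y :: "'a::boolean_algebra"
  assumes "\<And>\<phi>. bool_hom \<phi> \<Longrightarrow> \<phi> x = \<phi> y"
  shows "x = y"
proof (rule ccontr)
  assume "x \<noteq> y"
  then have "inf x (- y) \<noteq> bot \<or> inf y (- x) \<noteq> bot"
    by (metis inf_shunt double_compl order.antisym)
  then obtain \<phi> where "bool_hom \<phi>" "\<phi> (inf x (- y)) \<or> \<phi> (inf y (- x))"
    using bool_hom_exists by blast
  then show False
    using assms by (auto simp: bool_hom_simps)
qed

section \<open>Bochvar algebras through their homomorphisms into WK^e\<close>

lemma wk_or_J2_neg_J2: "wk_or (wk_J2 a) (wk_neg (wk_J2 a)) = W1"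
  by (cases a) simp_all

lemma wk_and_neg_J2: "wk_and (wk_neg (wk_J2 a)) a = wk_and a (wk_neg a)"
  by (cases a) simp_all

lemma wk_and_J2_eq_W0:
  assumes "wk_or b (wk_neg b) = W1" "wk_and a b = wk_and a (wk_neg a)"
  shows "wk_and (wk_J2 a) b = W0"
  using assms by (cases a; cases b) simp_all

definition wk_hom ::
  "'b set \<Rightarrow> ('b \<Rightarrow> 'b \<Rightarrow> 'b) \<Rightarrow> ('b \<Rightarrow> 'b \<Rightarrow> 'b) \<Rightarrow> ('b \<Rightarrow> 'b) \<Rightarrow> ('b \<Rightarrow> 'b) \<Rightarrow> 'b \<Rightarrow> 'b
   \<Rightarrow> ('b \<Rightarrow> wk) \<Rightarrow> bool" where
  "wk_hom U mt jn ng j2 z u s \<longleftrightarrow>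
     (\<forall>x\<in>U. \<forall>y\<in>U. s (mt x y) = wk_and (s x) (s y) \<and> s (jn x y) = wk_or (s x) (s y)) \<and>
     (\<forall>x\<in>U. s (ng x) = wk_neg (s x) \<and> s (j2 x) = wk_J2 (s x)) \<and> s z = W0 \<and> s u = W1"

lemma wk_homD:
  assumes "wk_hom U mt jn ng j2 z u s" "x \<in> U" "y \<in> U"
  shows "s (mt x y) = wk_and (s x) (s y)" "s (jn x y) = wk_or (s x) (s y)"
    "s (ng x) = wk_neg (s x)" "s (j2 x) = wk_J2 (s x)" "s z = W0" "s u = W1"
  using assms by (simp_all add: wk_hom_def)

text \<open>Each coordinate of an embedding into a power of WK^e is a homomorphism into WK^e, so the
  index set can always be taken to be the set of all such homomorphisms.\<close>

lemma bochvar_algebra_iff_wk_homs: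
  fixes U :: "'b set"
  shows "bochvar_algebra U mt jn ng j2 z u \<longleftrightarrow>
     ((\<forall>x\<in>U. \<forall>y\<in>U. mt x y \<in> U \<and> jn x y \<in> U) \<and> (\<forall>x\<in>U. ng x \<in> U \<and> j2 x \<in> U) \<and>
      z \<in> U \<and> u \<in> U) \<and>
     (\<forall>x\<in>U. \<forall>y\<in>U. (\<forall>s. wk_hom U mt jn ng j2 z u s \<longrightarrow> s x = s y) \<longrightarrow> x = y)"
  (is "?lhs \<longleftrightarrow> ?closed \<and> ?separating")
proof
  assume ?lhs
  then obtain X :: "('b \<Rightarrow> wk) set" and h where closed: ?closed
    and hom: "\<forall>s\<in>X. wk_hom U mt jn ng j2 z u (\<lambda>x. h x s)"
    and inj: "\<forall>x\<in>U. \<forall>y\<in>U. (\<forall>s\<in>X. h x s = h y s) \<longrightarrow> x = y"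
    unfolding bochvar_algebra_def
    apply (elim conjE exE)
    subgoal for X h by (rule that[of X h]) (simp_all add: wk_hom_def)
    done
  have ?separating
    using inj hom by fastforce
  with closed show "?closed \<and> ?separating" ..
next
  assume "?closed \<and> ?separating"
  then show ?lhs
    unfolding bochvar_algebra_def
    by (intro conjI exI[of _ "Collect (wk_hom U mt jn ng j2 z u)"] exI[of _ "\<lambda>x s. s x"])
       (auto simp: wk_hom_def)
qed

context
  fixes U mt jn ng j2 z u
  assumes bochvar: "bochvar_algebra U mt jn ng j2 z u"
begin

lemma bochvar_algebra_closed:
  "x \<in> U \<Longrightarrow> y \<in> U \<Longrightarrow> mt x y \<in> U" "x \<in> U \<Longrightarrow> y \<in> U \<Longrightarrow> jn x y \<in> U"
  "x \<in> U \<Longrightarrow> ng x \<in> U" "x \<in> U \<Longrightarrow> j2 x \<in> U" "z \<in> U" "u \<in> U"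
  using bochvar by (simp_all add: bochvar_algebra_iff_wk_homs)

lemma bochvar_algebra_eqI:
  assumes "x \<in> U" "y \<in> U" "\<And>s. wk_hom U mt jn ng j2 z u s \<Longrightarrow> s x = s y"
  shows "x = y"
  using bochvar assms by (simp add: bochvar_algebra_iff_wk_homs)

lemma bochvar_algebra_J2_join_neg:
  assumes "x \<in> U"
  shows "jn (j2 x) (ng (j2 x)) = u"
  using assms by (intro bochvar_algebra_eqI)
    (simp_all add: bochvar_algebra_closed wk_homD wk_or_J2_neg_J2)

lemma bochvar_algebra_neg_J2_meet:
  assumes "x \<in> U"
  shows "mt (ng (j2 x)) x = mt x (ng x)"
  using assms by (intro bochvar_algebra_eqI)
    (simp_all add: bochvar_algebra_closed wk_homD wk_and_neg_J2)

lemma bochvar_algebra_J2_meet_zero: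
  assumes x: "x \<in> U" and g: "g \<in> U" "jn g (ng g) = u" "mt x g = mt x (ng x)"
  shows "mt (j2 x) g = z"
proof (rule bochvar_algebra_eqI)
  fix s assume s: "wk_hom U mt jn ng j2 z u s"
  have "wk_or (s g) (wk_neg (s g)) = W1" "wk_and (s x) (s g) = wk_and (s x) (wk_neg (s x))"
    using arg_cong[OF g(2), of s] arg_cong[OF g(3), of s] s x g(1)
    by (simp_all add: wk_homD bochvar_algebra_closed)
  then have "wk_and (wk_J2 (s x)) (s g) = W0"
    by (rule wk_and_J2_eq_W0)
  then show "s (mt (j2 x) g) = s z"
    using s x g(1) by (simp add: wk_homD bochvar_algebra_closed)
qed (use x g in \<open>simp_all add: bochvar_algebra_closed\<close>)

end

section \<open>The Plonka sum of a Bochvar system\<close>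

lemma fcls_mem: "b \<in> fcls i a \<longleftrightarrow> inf i b = inf i a"
proof -
  have "b \<in> fcls i a \<longleftrightarrow> inf i a \<le> b \<and> inf i b \<le> a"
    by (simp add: fcls_def shunt1)
  also have "\<dots> \<longleftrightarrow> inf i b = inf i a"
  proof
    assume "inf i a \<le> b \<and> inf i b \<le> a"
    then show "inf i b = inf i a"
      by (intro order.antisym) simp_all
  next
    assume "inf i b = inf i a"
    then show "inf i a \<le> b \<and> inf i b \<le> a"
      by (metis inf.cobounded2)
  qed
  finally show ?thesis .
qed

lemma fcls_eq_iff: "fcls i a = fcls i b \<longleftrightarrow> inf i a = inf i b"
proof
  assume "fcls i a = fcls i b"
  then show "inf i a = inf i b"
    using fcls_mem[of a i a] fcls_mem[of a i b] by simp
next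
  assume "inf i a = inf i b"
  then show "fcls i a = fcls i b"
    by (simp add: set_eq_iff fcls_mem)
qed

lemma crep_fcls: "inf i (crep (fcls i a)) = inf i a"
proof -
  have "crep (fcls i a) \<in> fcls i a"
    unfolding crep_def by (rule someI[of _ a]) (simp add: fcls_mem)
  then show ?thesis
    by (simp add: fcls_mem)
qed

lemma inf_cong_le:
  fixes i :: "'a::semilattice_inf"
  assumes "k \<le> i" "inf i a = inf i b"
  shows "inf k a = inf k b"
proof -
  from assms(1) have "inf k i = k"
    by (rule inf.absorb1)
  then have "inf k x = inf k (inf i x)" for x
    by (simp flip: inf.assoc)
  with assms(2) show ?thesis
    by metis
qed

lemma ptrans_fcls: "k \<le> i \<Longrightarrow> ptrans k (fcls i a) = fcls k a"
  by (simp add: ptrans_def fcls_eq_iff inf_cong_le[OF _ crep_fcls])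

lemma pl_meet_fcls: "pl_meet (i, fcls i a) (j, fcls j b) = (inf i j, fcls (inf i j) (inf a b))"
proof -
  let ?k = "inf i j"
  have distrib: "inf ?k (inf c d) = inf (inf ?k c) (inf ?k d)" for c d
    by (simp add: inf_aci)
  have "inf ?k (inf (crep (fcls ?k a)) (crep (fcls ?k b))) = inf ?k (inf a b)"
    by (simp only: distrib crep_fcls)
  then show ?thesis
    by (simp add: pl_meet_def Let_def ptrans_fcls fcls_eq_iff)
qed

lemma pl_join_fcls: "pl_join (i, fcls i a) (j, fcls j b) = (inf i j, fcls (inf i j) (sup a b))"
proof -
  let ?k = "inf i j"
  have "inf ?k (sup (crep (fcls ?k a)) (crep (fcls ?k b))) = inf ?k (sup a b)"
    using crep_fcls[of ?k a] crep_fcls[of ?k b] by (simp add: inf_sup_distrib1)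
  then show ?thesis
    by (simp add: pl_join_def Let_def ptrans_fcls fcls_eq_iff)
qed

lemma inf_compl_cong:
  fixes i :: "'a::boolean_algebra"
  shows "inf i a = inf i b \<Longrightarrow> inf i (- a) = inf i (- b)"
proof -
  have "inf i (- x) = inf i (- inf i x)" for x
    by (simp add: inf_sup_distrib1)
  then show "inf i a = inf i b \<Longrightarrow> inf i (- a) = inf i (- b)"
    by metis
qed

lemma pl_neg_fcls: "pl_neg (i, fcls i a) = (i, fcls i (- a))"
  by (simp add: pl_neg_def fcls_eq_iff inf_compl_cong[OF crep_fcls])

lemma pl_univE:
  assumes "x \<in> pl_univ I"
  obtains i a where "x = (i, fcls i a)" "i \<in> I"
  using assms by (auto simp: pl_univ_def)

lemma pl_univ_fcls [simp]: "(i, fcls i a) \<in> pl_univ I \<longleftrightarrow> i \<in> I"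
  by (auto simp: pl_univ_def)

definition pl_J2 :: "('a::boolean_algebra \<times> 'a set) \<Rightarrow> ('a \<times> 'a set)" where
  "pl_J2 x = (top, fcls top (inf (fst x) (crep (snd x))))"

lemma pl_J2_fcls: "pl_J2 (i, fcls i a) = (top, fcls top (inf i a))"
  by (simp add: pl_J2_def crep_fcls)

definition pl_eval :: "('a::boolean_algebra \<Rightarrow> bool) \<Rightarrow> ('a \<times> 'a set) \<Rightarrow> wk" where
  "pl_eval \<phi> x = (if \<phi> (fst x) then if \<phi> (crep (snd x)) then W1 else W0 else Wh)"

lemma pl_eval_fcls:
  assumes "bool_hom \<phi>"
  shows "pl_eval \<phi> (i, fcls i a) = (if \<phi> i then if \<phi> a then W1 else W0 else Wh)"
proof -
  have "\<phi> i \<Longrightarrow> \<phi> (crep (fcls i a)) \<longleftrightarrow> \<phi> a"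
    using arg_cong[OF crep_fcls[of i a], of \<phi>] by (simp add: bool_hom_simps[OF assms])
  then show ?thesis
    by (simp add: pl_eval_def)
qed

lemma pl_eval_wk_hom:
  assumes "bool_hom \<phi>"
  shows "wk_hom (pl_univ I) pl_meet pl_join pl_neg pl_J2 pl_zero pl_one (pl_eval \<phi>)"
  by (auto elim!: pl_univE simp: wk_hom_def pl_meet_fcls pl_join_fcls pl_neg_fcls pl_J2_fcls
      pl_zero_def pl_one_def pl_eval_fcls bool_hom_simps assms)

lemma pl_J2_bochvar_algebra:
  assumes "bochvar_system I"
  shows "bochvar_algebra (pl_univ I) pl_meet pl_join pl_neg pl_J2 pl_zero pl_one"
  unfolding bochvar_algebra_iff_wk_homs
proof (intro conjI ballI impI)
  have I: "top \<in> I" "\<And>i j. i \<in> I \<Longrightarrow> j \<in> I \<Longrightarrow> inf i j \<in> I"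
    using assms by (simp_all add: bochvar_system_def)
  show "pl_meet x y \<in> pl_univ I" "pl_join x y \<in> pl_univ I"
    if "x \<in> pl_univ I" "y \<in> pl_univ I" for x y
    using that I by (auto elim!: pl_univE simp: pl_meet_fcls pl_join_fcls)
  show "pl_neg x \<in> pl_univ I" "pl_J2 x \<in> pl_univ I" if "x \<in> pl_univ I" for x
    using that I by (auto elim!: pl_univE simp: pl_neg_fcls pl_J2_fcls)
  show "pl_zero \<in> pl_univ I" "pl_one \<in> pl_univ I"
    using I by (simp_all add: pl_zero_def pl_one_def)
  fix x y assume "x \<in> pl_univ I" "y \<in> pl_univ I"
  then obtain i a j b where x: "x = (i, fcls i a)" and y: "y = (j, fcls j b)"
    by (auto elim!: pl_univE)
  assume "\<forall>s. wk_hom (pl_univ I) pl_meet pl_join pl_neg pl_J2 pl_zero pl_one s \<longrightarrow> s x = s y"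
  then have agree: "pl_eval \<phi> x = pl_eval \<phi> y" if "bool_hom \<phi>" for \<phi>
    using pl_eval_wk_hom[OF that] by blast
  have "\<phi> i = \<phi> j \<and> \<phi> (inf i a) = \<phi> (inf j b)" if \<phi>: "bool_hom \<phi>" for \<phi>
    using agree[OF \<phi>] \<phi> by (auto simp: x y pl_eval_fcls bool_hom_simps split: if_splits)
  then have "i = j" "inf i a = inf j b"
    by (auto intro: bool_hom_eqI)
  then show "x = y"
    by (simp add: x y fcls_eq_iff)
qed

lemma pl_J2_unique:
  assumes "bochvar_system I"
    and bochvar: "bochvar_algebra (pl_univ I) pl_meet pl_join pl_neg j2 pl_zero pl_one"
    and x: "x \<in> pl_univ I"
  shows "j2 x = pl_J2 x"
proof -
  obtain i a where x_eq: "x = (i, fcls i a)"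
    using x by (rule pl_univE)
  obtain k b where y_eq: "j2 x = (k, fcls k b)"
    using bochvar_algebra_closed(4)[OF bochvar x] by (rule pl_univE)
  have "k = top"
    using bochvar_algebra_J2_join_neg[OF bochvar x]
    by (simp add: y_eq pl_neg_fcls pl_join_fcls pl_one_def)
  have "inf i (inf (- b) a) = inf i (inf a (- a))"
    using bochvar_algebra_neg_J2_meet[OF bochvar x] unfolding y_eq
    by (simp add: x_eq \<open>k = top\<close> pl_neg_fcls pl_meet_fcls fcls_eq_iff)
  then have "inf (inf i a) (- b) = bot"
    by (simp add: ac_simps)
  then have "inf i a \<le> b"
    by (simp add: inf_shunt)
  define g where "g = (top :: 'a, fcls top (- inf i a))"
  have "g \<in> pl_univ I"
    using assms(1) by (simp add: g_def bochvar_system_def)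
  moreover have "pl_join g (pl_neg g) = pl_one"
    by (simp add: g_def pl_neg_fcls pl_join_fcls pl_one_def del: compl_inf)
  moreover have "pl_meet x g = pl_meet x (pl_neg x)"
    by (simp add: x_eq g_def pl_neg_fcls pl_meet_fcls fcls_eq_iff inf_sup_distrib1)
  ultimately have "pl_meet (j2 x) g = pl_zero"
    by (rule bochvar_algebra_J2_meet_zero[OF bochvar x])
  then have "b \<le> inf i a"
    by (simp add: y_eq \<open>k = top\<close> g_def pl_meet_fcls pl_zero_def fcls_eq_iff inf_shunt)
  with \<open>inf i a \<le> b\<close> show ?thesis
    unfolding y_eq by (simp add: x_eq \<open>k = top\<close> pl_J2_fcls order.antisym)
qed

theorem theorem3p3:
  fixes I :: "'a::boolean_algebra set"
  assumes "bochvar_system I"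
  shows "\<exists>j2 :: ('a \<times> 'a set) \<Rightarrow> ('a \<times> 'a set).
           bochvar_algebra (pl_univ I) pl_meet pl_join pl_neg j2 pl_zero pl_one \<and>
           (\<forall>j2'. bochvar_algebra (pl_univ I) pl_meet pl_join pl_neg j2' pl_zero pl_one
                   \<longrightarrow> (\<forall>x\<in>pl_univ I. j2' x = j2 x))"
  using pl_J2_bochvar_algebra[OF assms] pl_J2_unique[OF assms] by blast

end
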